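(* Let $\Delta$ be an alphabet, $\zeta:\Sigma\to 2^{\mathsf{SP}(\Delta)}$ an atomic substitution, and $L,L'\subseteq\Sigma^*$. Then $\zeta(L\cap L')=\zeta(L)\cap\zeta(L')$, $\zeta(L\setminus L')=\zeta(L)\setminus\zeta(L')$, and $\zeta(L)=\emptyset$ if and only if $L=\emptyset$.
   Context: Pomsets over an alphabet are isomorphism classes of finite labelled posets; $1$ is the empty pomset; $U\cdot V$ is the disjoint union with all elements of $U$ below all elements of $V$; $U\parallel V$ is the disjoint union of orders; these lift pointwise to sets of pomsets. $\mathsf{SP}(\Delta)$ is the smallest set containing $1$ and the one-element pomsets over $\Delta$, closed under $\cdot,\parallel$. Words over $\Sigma$ are identified with pomsets built from one-element pomsets using only $\cdot$; $\Sigma^*$ is the set of words. A substitution $\zeta:\Sigma\to 2^{\mathsf{SP}(\Delta)}$ is extended by $\zeta(1)=\{1\}$, $\zeta(U\cdot V)=\zeta(U)\cdot\zeta(V)$, $\zeta(U\parallel V)=\zeta(U)\parallel\zeta(V)$, and to languages by $\zeta(L)=\bigcup_{U\in L}\zeta(U)$. A pomset $U$ is a sequential prime if it is non-empty and $U=V\cdot W$ implies $V=1$ or $W=1$. $\zeta$ is atomic if (i) for each $a\in\Sigma$, $\zeta(a)$ consists only of sequential primes, and (ii) for $a,b\in\Sigma$, $\zeta(a)\cap\zeta(b)\ne\emptyset$ iff $a=b$. *)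

theory Defs
  imports Main
begin

text \<open>Concrete finite labelled posets: carrier (finite set of naturals),
  reflexive partial order on the carrier, labelling (only values on the carrier matter).\<close>

type_synonym 'a lpo = "nat set \<times> (nat \<times> nat) set \<times> (nat \<Rightarrow> 'a)"

definition is_lpo :: "'a lpo \<Rightarrow> bool" where
  "is_lpo P \<longleftrightarrow> (case P of (C, R, l) \<Rightarrow>
      finite C \<and> R \<subseteq> C \<times> C \<and> partial_order_on C R)"

definition lpo_iso :: "'a lpo \<Rightarrow> 'a lpo \<Rightarrow> bool" where
  "lpo_iso P Q \<longleftrightarrow> (case P of (C, R, l) \<Rightarrow> case Q of (C', R', l') \<Rightarrow>
      (\<exists>f. bij_betw f C C'
         \<and> (\<forall>x\<in>C. \<forall>y\<in>C. (x, y) \<in> R \<longleftrightarrow> (f x, f y) \<in> R')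
         \<and> (\<forall>x\<in>C. l' (f x) = l x)))"

definition lpo_class :: "'a lpo \<Rightarrow> 'a lpo set" where
  "lpo_class P = {Q. is_lpo Q \<and> lpo_iso P Q}"

typedef 'a pomset = "{S :: 'a lpo set. \<exists>P. is_lpo P \<and> S = lpo_class P}"
proof
  show "lpo_class ({}, {}, \<lambda>_. undefined) \<in> {S :: 'a lpo set. \<exists>P. is_lpo P \<and> S = lpo_class P}"
    by (auto simp: is_lpo_def partial_order_on_def preorder_on_def refl_on_def trans_def antisym_def)
qed

definition pom_of :: "'a lpo \<Rightarrow> 'a pomset" where
  "pom_of P = Abs_pomset (lpo_class P)"

definition pom_rep :: "'a pomset \<Rightarrow> 'a lpo" where
  "pom_rep U = (SOME P. P \<in> Rep_pomset U)"

text \<open>Disjoint unions: left part encoded by even numbers, right part by odd numbers.\<close>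

definition lpo_par :: "'a lpo \<Rightarrow> 'a lpo \<Rightarrow> 'a lpo" where
  "lpo_par P Q = (case P of (C, R, l) \<Rightarrow> case Q of (C', R', l') \<Rightarrow>
     ((\<lambda>x. 2 * x) ` C \<union> (\<lambda>x. 2 * x + 1) ` C',
      (\<lambda>(x, y). (2 * x, 2 * y)) ` R \<union> (\<lambda>(x, y). (2 * x + 1, 2 * y + 1)) ` R',
      \<lambda>n. if even n then l (n div 2) else l' (n div 2)))"

definition lpo_seq :: "'a lpo \<Rightarrow> 'a lpo \<Rightarrow> 'a lpo" where
  "lpo_seq P Q = (case P of (C, R, l) \<Rightarrow> case Q of (C', R', l') \<Rightarrow>
     ((\<lambda>x. 2 * x) ` C \<union> (\<lambda>x. 2 * x + 1) ` C',
      (\<lambda>(x, y). (2 * x, 2 * y)) ` R \<union> (\<lambda>(x, y). (2 * x + 1, 2 * y + 1)) ` R'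
        \<union> ((\<lambda>x. 2 * x) ` C \<times> (\<lambda>x. 2 * x + 1) ` C'),
      \<lambda>n. if even n then l (n div 2) else l' (n div 2)))"

definition pom_one :: "'a pomset" where
  "pom_one = pom_of ({}, {}, \<lambda>_. undefined)"

definition pom_single :: "'a \<Rightarrow> 'a pomset" where
  "pom_single a = pom_of ({0}, {(0, 0)}, \<lambda>_. a)"

definition pom_seq :: "'a pomset \<Rightarrow> 'a pomset \<Rightarrow> 'a pomset" where
  "pom_seq U V = pom_of (lpo_seq (pom_rep U) (pom_rep V))"

definition pom_par :: "'a pomset \<Rightarrow> 'a pomset \<Rightarrow> 'a pomset" where
  "pom_par U V = pom_of (lpo_par (pom_rep U) (pom_rep V))"

definition pset_seq :: "'a pomset set \<Rightarrow> 'a pomset set \<Rightarrow> 'a pomset set" where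
  "pset_seq A B = {pom_seq U V | U V. U \<in> A \<and> V \<in> B}"

definition pset_par :: "'a pomset set \<Rightarrow> 'a pomset set \<Rightarrow> 'a pomset set" where
  "pset_par A B = {pom_par U V | U V. U \<in> A \<and> V \<in> B}"

inductive_set SP :: "'a set \<Rightarrow> 'a pomset set" for \<Delta> :: "'a set" where
  SP_one: "pom_one \<in> SP \<Delta>"
| SP_single: "a \<in> \<Delta> \<Longrightarrow> pom_single a \<in> SP \<Delta>"
| SP_seq: "U \<in> SP \<Delta> \<Longrightarrow> V \<in> SP \<Delta> \<Longrightarrow> pom_seq U V \<in> SP \<Delta>"
| SP_par: "U \<in> SP \<Delta> \<Longrightarrow> V \<in> SP \<Delta> \<Longrightarrow> pom_par U V \<in> SP \<Delta>"

text \<open>Substitution extended to words (words as lists = sequential pomsets) and languages.\<close>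

fun subst_word :: "('s \<Rightarrow> 'd pomset set) \<Rightarrow> 's list \<Rightarrow> 'd pomset set" where
  "subst_word \<zeta> [] = {pom_one}"
| "subst_word \<zeta> (a # w) = pset_seq (\<zeta> a) (subst_word \<zeta> w)"

definition subst_lang :: "('s \<Rightarrow> 'd pomset set) \<Rightarrow> 's list set \<Rightarrow> 'd pomset set" where
  "subst_lang \<zeta> L = (\<Union>w\<in>L. subst_word \<zeta> w)"

definition seq_prime :: "'a pomset \<Rightarrow> bool" where
  "seq_prime U \<longleftrightarrow> U \<noteq> pom_one \<and> (\<forall>V W. U = pom_seq V W \<longrightarrow> V = pom_one \<or> W = pom_one)"

definition atomic :: "'s set \<Rightarrow> ('s \<Rightarrow> 'd pomset set) \<Rightarrow> bool" where
  "atomic \<Sigma> \<zeta> \<longleftrightarrow> (\<forall>a\<in>\<Sigma>. \<forall>U\<in>\<zeta> a. seq_prime U)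
     \<and> (\<forall>a\<in>\<Sigma>. \<forall>b\<in>\<Sigma>. \<zeta> a \<inter> \<zeta> b \<noteq> {} \<longleftrightarrow> a = b)"

end

theory Submission
  imports Defs "HOL-Library.Disjoint_Sets"
begin

text \<open>A cut of a labelled poset is a set \<open>Z\<close> of points each of which lies below every point
  outside \<open>Z\<close>; a poset with a cut \<open>Z\<close> is the sequential composition of its restrictions to
  \<open>Z\<close> and to the complement, so a pomset is a sequential prime exactly when it has no
  proper nonempty cut. By antisymmetry the cuts of a poset form a chain. Hence if \<open>U\<close> is a
  sequential prime, the copy of \<open>U\<close> in \<open>U \<cdot> V\<close> is the least nonempty cut, and since
  isomorphisms preserve cuts, \<open>U \<cdot> V = U' \<cdot> V'\<close> with \<open>U\<close>, \<open>U'\<close> sequential primes forces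
  \<open>U = U'\<close> and \<open>V = V'\<close>. By induction on words, an atomic substitution therefore maps distinct
  words to disjoint nonempty sets, and unions over a disjoint family commute with intersection
  and difference.\<close>

definition lpo_iso_by :: "(nat \<Rightarrow> nat) \<Rightarrow> 'a lpo \<Rightarrow> 'a lpo \<Rightarrow> bool" where
  "lpo_iso_by f P Q \<longleftrightarrow> (case P of (C, R, l) \<Rightarrow> case Q of (C', R', l') \<Rightarrow>
      bij_betw f C C'
      \<and> (\<forall>x\<in>C. \<forall>y\<in>C. (x, y) \<in> R \<longleftrightarrow> (f x, f y) \<in> R')
      \<and> (\<forall>x\<in>C. l' (f x) = l x))"

lemma is_lpo_fst_snd:
  "is_lpo P \<longleftrightarrow> finite (fst P) \<and> fst (snd P) \<subseteq> fst P \<times> fst P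
     \<and> refl_on (fst P) (fst (snd P)) \<and> trans (fst (snd P)) \<and> antisym (fst (snd P))"
  by (cases P) (auto simp: is_lpo_def partial_order_on_def preorder_on_def)

lemma lpo_iso_by_fst_snd:
  "lpo_iso_by f P Q \<longleftrightarrow> bij_betw f (fst P) (fst Q)
     \<and> (\<forall>x\<in>fst P. \<forall>y\<in>fst P. (x, y) \<in> fst (snd P) \<longleftrightarrow> (f x, f y) \<in> fst (snd Q))
     \<and> (\<forall>x\<in>fst P. snd (snd Q) (f x) = snd (snd P) x)"
  by (cases P; cases Q) (simp add: lpo_iso_by_def)

lemma lpo_iso_iff_iso_by: "lpo_iso P Q \<longleftrightarrow> (\<exists>f. lpo_iso_by f P Q)"
  by (cases P; cases Q) (simp add: lpo_iso_def lpo_iso_by_def)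

lemma lpo_iso_by_id: "lpo_iso_by id P P"
  by (cases P) (auto simp: lpo_iso_by_def)

lemma lpo_iso_by_inv:
  assumes "lpo_iso_by f P Q" shows "lpo_iso_by (inv_into (fst P) f) Q P"
proof -
  obtain C R l C' R' l' where PQ: "P = (C, R, l)" "Q = (C', R', l')" by (cases P; cases Q)
  then have f: "bij_betw f C C'" "\<forall>x\<in>C. \<forall>y\<in>C. (x, y) \<in> R \<longleftrightarrow> (f x, f y) \<in> R'"
      "\<forall>x\<in>C. l' (f x) = l x"
    using assms by (auto simp: lpo_iso_by_def)
  have g: "bij_betw (inv_into C f) C' C" using f(1) by (rule bij_betw_inv_into)
  have "f (inv_into C f y) = y" "inv_into C f y \<in> C" if "y \<in> C'" for y
    using that f(1) g by (auto simp: bij_betw_inv_into_right bij_betwE)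
  with f g show ?thesis by (auto simp: lpo_iso_by_def PQ) metis+
qed

lemma lpo_iso_by_comp:
  assumes "lpo_iso_by f P Q" "lpo_iso_by g Q S" shows "lpo_iso_by (g \<circ> f) P S"
proof -
  obtain C R l C' R' l' C'' R'' l'' where PQS: "P = (C, R, l)" "Q = (C', R', l')" "S = (C'', R'', l'')"
    by (cases P; cases Q; cases S)
  have "bij_betw f C C'" "bij_betw g C' C''" using assms by (auto simp: lpo_iso_by_def PQS)
  with assms show ?thesis
    by (auto simp: lpo_iso_by_def PQS bij_betw_trans dest: bij_betwE)
qed

lemma lpo_iso_refl: "lpo_iso P P"
  using lpo_iso_by_id lpo_iso_iff_iso_by by blast

lemma lpo_iso_sym: "lpo_iso P Q \<Longrightarrow> lpo_iso Q P"
  using lpo_iso_by_inv lpo_iso_iff_iso_by by blast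

lemma lpo_iso_trans: "lpo_iso P Q \<Longrightarrow> lpo_iso Q S \<Longrightarrow> lpo_iso P S"
  using lpo_iso_by_comp lpo_iso_iff_iso_by by metis

lemma lpo_class_eq: "lpo_iso P Q \<Longrightarrow> lpo_class P = lpo_class Q"
  unfolding lpo_class_def using lpo_iso_sym lpo_iso_trans by blast

lemma pom_of_eq_iff:
  assumes "is_lpo P" "is_lpo Q" shows "pom_of P = pom_of Q \<longleftrightarrow> lpo_iso P Q"
proof
  assume "pom_of P = pom_of Q"
  then have "lpo_class P = lpo_class Q"
    unfolding pom_of_def using Abs_pomset_inject assms by blast
  moreover have "Q \<in> lpo_class Q" using assms lpo_iso_refl by (simp add: lpo_class_def)
  ultimately show "lpo_iso P Q" by (auto simp: lpo_class_def)
qed (simp add: pom_of_def lpo_class_eq)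

lemma is_lpo_pom_rep: "is_lpo (pom_rep U)"
  and pom_of_pom_rep: "pom_of (pom_rep U) = U"
proof -
  obtain P where P: "is_lpo P" "Rep_pomset U = lpo_class P" using Rep_pomset by blast
  then have "P \<in> Rep_pomset U" using lpo_iso_refl by (simp add: lpo_class_def)
  then have "pom_rep U \<in> lpo_class P" unfolding pom_rep_def P(2) by (rule someI)
  then have rep: "is_lpo (pom_rep U)" "lpo_iso P (pom_rep U)" by (auto simp: lpo_class_def)
  have "pom_of (pom_rep U) = Abs_pomset (Rep_pomset U)"
    unfolding pom_of_def P(2) using lpo_class_eq rep(2) by metis
  then show "is_lpo (pom_rep U)" "pom_of (pom_rep U) = U" using rep(1) Rep_pomset_inverse by simp_all
qed

lemma pom_rep_cases:
  obtains C R l where "pom_rep U = (C, R, l)" "is_lpo (C, R, l)" "pom_of (C, R, l) = U"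
  using is_lpo_pom_rep pom_of_pom_rep by (metis prod_cases3)

lemma lpo_seq_carrier:
  "fst (lpo_seq (C, R, l) (D, S, m)) = (*) 2 ` C \<union> (\<lambda>x. Suc (2 * x)) ` D"
  by (simp add: lpo_seq_def)

lemma even_neq_odd [simp]:
  "2 * a \<noteq> 2 * b + 1" "2 * b + 1 \<noteq> 2 * a" "2 * a \<noteq> Suc (2 * b)" "Suc (2 * b) \<noteq> 2 * a"
  for a b :: nat
  by presburger+

lemma lpo_seq_mem [simp]:
  "2 * a \<in> fst (lpo_seq (C, R, l) (D, S, m)) \<longleftrightarrow> a \<in> C"
  "Suc (2 * a) \<in> fst (lpo_seq (C, R, l) (D, S, m)) \<longleftrightarrow> a \<in> D"
  by (auto simp: lpo_seq_def)

lemma lpo_seq_rel [simp]: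
  "(2 * a, 2 * b) \<in> fst (snd (lpo_seq (C, R, l) (D, S, m))) \<longleftrightarrow> (a, b) \<in> R"
  "(Suc (2 * a), Suc (2 * b)) \<in> fst (snd (lpo_seq (C, R, l) (D, S, m))) \<longleftrightarrow> (a, b) \<in> S"
  "(2 * a, Suc (2 * b)) \<in> fst (snd (lpo_seq (C, R, l) (D, S, m))) \<longleftrightarrow> a \<in> C \<and> b \<in> D"
  "(Suc (2 * a), 2 * b) \<notin> fst (snd (lpo_seq (C, R, l) (D, S, m)))"
  by (auto simp: lpo_seq_def)

lemma lpo_seq_label [simp]:
  "snd (snd (lpo_seq (C, R, l) (D, S, m))) (2 * a) = l a"
  "snd (snd (lpo_seq (C, R, l) (D, S, m))) (Suc (2 * a)) = m a"
  by (auto simp: lpo_seq_def)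

lemma nat_even_odd_cases: obtains a where "n = 2 * a" | a where "n = Suc (2 * a)"
  by (cases "even n") (auto elim!: evenE oddE)

lemma is_lpo_seq:
  assumes "is_lpo (C, R, l)" "is_lpo (D, S, m)" shows "is_lpo (lpo_seq (C, R, l) (D, S, m))"
proof -
  have P: "finite C" "R \<subseteq> C \<times> C" "refl_on C R" "trans R" "antisym R"
   and Q: "finite D" "S \<subseteq> D \<times> D" "refl_on D S" "trans S" "antisym S"
    using assms by (simp_all add: is_lpo_fst_snd)
  let ?T = "fst (snd (lpo_seq (C, R, l) (D, S, m)))"
  have sub: "?T \<subseteq> fst (lpo_seq (C, R, l) (D, S, m)) \<times> fst (lpo_seq (C, R, l) (D, S, m))"
    using P(2) Q(2) by (auto simp: lpo_seq_def)
  have "trans ?T"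
  proof (rule transI)
    fix x y z assume "(x, y) \<in> ?T" "(y, z) \<in> ?T"
    with sub P(2,4) Q(2,4) show "(x, z) \<in> ?T"
      by (cases x rule: nat_even_odd_cases; cases y rule: nat_even_odd_cases;
          cases z rule: nat_even_odd_cases) (auto dest: transD)
  qed
  moreover have "antisym ?T"
  proof (rule antisymI)
    fix x y assume "(x, y) \<in> ?T" "(y, x) \<in> ?T"
    with P(5) Q(5) show "x = y"
      by (cases x rule: nat_even_odd_cases; cases y rule: nat_even_odd_cases) (auto dest: antisymD)
  qed
  moreover have "refl_on (fst (lpo_seq (C, R, l) (D, S, m))) ?T"
    using P(3) Q(3) sub by (auto simp: refl_on_def lpo_seq_carrier)
  ultimately show ?thesis using P(1) Q(1) sub by (simp add: is_lpo_fst_snd lpo_seq_carrier)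
qed

lemma lpo_iso_seq_cong:
  assumes "lpo_iso (C, R, l) (C', R', l')" "lpo_iso (D, S, m) (D', S', m')"
  shows "lpo_iso (lpo_seq (C, R, l) (D, S, m)) (lpo_seq (C', R', l') (D', S', m'))"
proof -
  obtain f g where f: "lpo_iso_by f (C, R, l) (C', R', l')" and g: "lpo_iso_by g (D, S, m) (D', S', m')"
    using assms lpo_iso_iff_iso_by by blast
  have f': "inj_on f C" "f ` C = C'" "\<forall>x\<in>C. \<forall>y\<in>C. (x, y) \<in> R \<longleftrightarrow> (f x, f y) \<in> R'"
      "\<forall>x\<in>C. l' (f x) = l x"
    using f by (simp_all add: lpo_iso_by_def bij_betw_def)
  have g': "inj_on g D" "g ` D = D'" "\<forall>x\<in>D. \<forall>y\<in>D. (x, y) \<in> S \<longleftrightarrow> (g x, g y) \<in> S'"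
      "\<forall>x\<in>D. m' (g x) = m x"
    using g by (simp_all add: lpo_iso_by_def bij_betw_def)
  define h where "h n = (if even n then 2 * f (n div 2) else Suc (2 * g (n div 2)))" for n
  have h [simp]: "h (2 * a) = 2 * f a" "h (Suc (2 * a)) = Suc (2 * g a)" for a
    by (simp_all add: h_def)
  let ?X = "fst (lpo_seq (C, R, l) (D, S, m))"
  have "inj_on h ?X"
  proof (rule inj_onI)
    fix x y assume "x \<in> ?X" "y \<in> ?X" "h x = h y"
    then show "x = y" using f'(1) g'(1) by (auto simp: lpo_seq_carrier dest: inj_onD)
  qed
  moreover have "h ` ?X = (*) 2 ` (f ` C) \<union> (\<lambda>x. Suc (2 * x)) ` (g ` D)"
    by (simp add: lpo_seq_carrier image_Un image_image)
  then have "h ` ?X = fst (lpo_seq (C', R', l') (D', S', m'))"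
    using f'(2) g'(2) by (simp add: lpo_seq_carrier)
  moreover have "f x \<in> C'" if "x \<in> C" for x using f'(2) that by blast
  moreover have "g x \<in> D'" if "x \<in> D" for x using g'(2) that by blast
  ultimately have "lpo_iso_by h (lpo_seq (C, R, l) (D, S, m)) (lpo_seq (C', R', l') (D', S', m'))"
    using f'(3,4) g'(3,4) by (auto simp: lpo_iso_by_fst_snd lpo_seq_carrier bij_betw_def)
  then show ?thesis using lpo_iso_iff_iso_by by blast
qed

lemma pom_seq_pom_of:
  assumes "is_lpo P" "is_lpo Q" shows "pom_seq (pom_of P) (pom_of Q) = pom_of (lpo_seq P Q)"
proof -
  obtain C R l D S m where PQ: "P = (C, R, l)" "Q = (D, S, m)" by (cases P; cases Q)
  obtain C' R' l' D' S' m' where rep: "pom_rep (pom_of P) = (C', R', l')" "pom_rep (pom_of Q) = (D', S', m')"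
    by (metis prod_cases3)
  have "lpo_iso (C', R', l') P" "lpo_iso (D', S', m') Q"
    using is_lpo_pom_rep pom_of_pom_rep assms rep pom_of_eq_iff by metis+
  then have "lpo_iso (lpo_seq (C', R', l') (D', S', m')) (lpo_seq P Q)"
    unfolding PQ by (rule lpo_iso_seq_cong)
  moreover have "is_lpo (lpo_seq (C', R', l') (D', S', m'))"
    using is_lpo_pom_rep is_lpo_seq rep by metis
  moreover have "is_lpo (lpo_seq P Q)" using assms is_lpo_seq unfolding PQ by blast
  ultimately show ?thesis unfolding pom_seq_def rep using pom_of_eq_iff by blast
qed

lemma is_lpo_empty: "is_lpo ({}, {}, l)"
  by (simp add: is_lpo_def partial_order_on_def preorder_on_def refl_on_def trans_def antisym_def)

lemma pom_of_eq_one_iff: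
  assumes "is_lpo P" shows "pom_of P = pom_one \<longleftrightarrow> fst P = {}"
proof -
  obtain C R l where P: "P = (C, R, l)" by (cases P)
  have "R \<subseteq> C \<times> C" using assms by (simp add: is_lpo_def P)
  moreover have "pom_of P = pom_one \<longleftrightarrow> lpo_iso (C, R, l) ({}, {}, \<lambda>_. undefined)"
    unfolding pom_one_def P using pom_of_eq_iff is_lpo_empty assms P by blast
  ultimately show ?thesis by (auto simp: P lpo_iso_def bij_betw_def)
qed

definition lpo_restrict :: "'a lpo \<Rightarrow> nat set \<Rightarrow> 'a lpo" where
  "lpo_restrict P Z = (Z, fst (snd P) \<inter> Z \<times> Z, snd (snd P))"

definition lpo_cut :: "'a lpo \<Rightarrow> nat set \<Rightarrow> bool" where
  "lpo_cut P Z \<longleftrightarrow> Z \<subseteq> fst P \<and> (\<forall>x\<in>Z. \<forall>y\<in>fst P - Z. (x, y) \<in> fst (snd P))"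

lemma is_lpo_restrict:
  assumes "is_lpo P" "Z \<subseteq> fst P" shows "is_lpo (lpo_restrict P Z)"
  using assms finite_subset
  by (cases P) (auto simp: is_lpo_fst_snd lpo_restrict_def refl_on_def trans_def antisym_def)

lemma lpo_iso_by_restrict:
  assumes "lpo_iso_by f P Q" "Z \<subseteq> fst P"
  shows "lpo_iso_by f (lpo_restrict P Z) (lpo_restrict Q (f ` Z))"
proof -
  have "inj_on f Z" using assms by (auto simp: lpo_iso_by_fst_snd bij_betw_def intro: inj_on_subset)
  then show ?thesis
    using assms by (cases P; cases Q) (auto simp: lpo_iso_by_def lpo_restrict_def bij_betw_def subset_iff)
qed

lemma lpo_iso_by_cut:
  assumes "lpo_iso_by f P Q" "lpo_cut P Z" shows "lpo_cut Q (f ` Z)"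
proof -
  obtain C R l C' R' l' where PQ: "P = (C, R, l)" "Q = (C', R', l')" by (cases P; cases Q)
  have f: "inj_on f C" "f ` C = C'" "\<forall>x\<in>C. \<forall>y\<in>C. (x, y) \<in> R \<longleftrightarrow> (f x, f y) \<in> R'"
    using assms(1) by (simp_all add: PQ lpo_iso_by_def bij_betw_def)
  have Z: "Z \<subseteq> C" "\<forall>x\<in>Z. \<forall>y\<in>C - Z. (x, y) \<in> R" using assms(2) by (simp_all add: PQ lpo_cut_def)
  have "(f x, y') \<in> R'" if x: "x \<in> Z" and y': "y' \<in> C' - f ` Z" for x y'
  proof -
    obtain y where "y \<in> C" "y' = f y" using y' f(2) by blast
    with x y' Z f(3) show ?thesis by blast
  qed
  then show ?thesis using Z(1) f(2) by (auto simp: PQ lpo_cut_def)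
qed

lemma lpo_cut_chain:
  assumes "is_lpo P" "lpo_cut P Z1" "lpo_cut P Z2" shows "Z1 \<subseteq> Z2 \<or> Z2 \<subseteq> Z1"
proof (rule ccontr)
  assume "\<not> ?thesis"
  then obtain x y where "x \<in> Z1 - Z2" "y \<in> Z2 - Z1" by blast
  with assms have "(x, y) \<in> fst (snd P)" "(y, x) \<in> fst (snd P)" "antisym (fst (snd P))"
    by (auto simp: lpo_cut_def is_lpo_fst_snd)
  then show False using \<open>x \<in> Z1 - Z2\<close> \<open>y \<in> Z2 - Z1\<close> by (auto dest: antisymD)
qed

lemma lpo_iso_cut_split:
  assumes "is_lpo P" "lpo_cut P Z"
  shows "lpo_iso P (lpo_seq (lpo_restrict P Z) (lpo_restrict P (fst P - Z)))"
proof -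
  obtain C R l where P: "P = (C, R, l)" by (cases P)
  have R: "antisym R" "R \<subseteq> C \<times> C" and Z: "Z \<subseteq> C" "\<forall>x\<in>Z. \<forall>y\<in>C - Z. (x, y) \<in> R"
    using assms by (simp_all add: P is_lpo_fst_snd lpo_cut_def)
  define h where "h n = (if n \<in> Z then 2 * n else Suc (2 * n))" for n
  let ?Q = "lpo_seq (Z, R \<inter> Z \<times> Z, l) (C - Z, R \<inter> (C - Z) \<times> (C - Z), l)"
  have "inj_on h C" unfolding h_def by (rule inj_onI) (auto split: if_splits)
  moreover have "h ` C = fst ?Q" using Z(1) by (auto simp: lpo_seq_carrier h_def image_iff)
  moreover have "(x, y) \<in> R \<longleftrightarrow> (h x, h y) \<in> fst (snd ?Q)" if "x \<in> C" "y \<in> C" for x y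
  proof (cases "x \<in> Z"; cases "y \<in> Z")
    assume "x \<notin> Z" "y \<in> Z"
    then have "(x, y) \<notin> R" using Z(2) R(1) that by (metis DiffI antisymD)
    then show ?thesis using \<open>x \<notin> Z\<close> \<open>y \<in> Z\<close> by (simp add: h_def)
  qed (use that Z(2) in \<open>auto simp: h_def\<close>)
  ultimately have "lpo_iso_by h P ?Q" by (simp add: lpo_iso_by_fst_snd P bij_betw_def h_def)
  then show ?thesis by (auto simp: lpo_iso_iff_iso_by P lpo_restrict_def)
qed

lemma pom_of_cut_split:
  assumes "is_lpo P" "lpo_cut P Z"
  shows "pom_of P = pom_seq (pom_of (lpo_restrict P Z)) (pom_of (lpo_restrict P (fst P - Z)))"
proof -
  have "Z \<subseteq> fst P" using assms(2) lpo_cut_def by blast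
  then have "is_lpo (lpo_restrict P Z)" "is_lpo (lpo_restrict P (fst P - Z))"
    using assms(1) is_lpo_restrict by blast+
  moreover have "is_lpo (lpo_seq (lpo_restrict P Z) (lpo_restrict P (fst P - Z)))"
    using calculation is_lpo_seq by (metis prod_cases3)
  ultimately show ?thesis
    using assms pom_seq_pom_of lpo_iso_cut_split pom_of_eq_iff by metis
qed

lemma seq_prime_lpo_cut:
  assumes "is_lpo P" "seq_prime (pom_of P)" "lpo_cut P Z" shows "Z = {} \<or> Z = fst P"
proof -
  have Z: "Z \<subseteq> fst P" using assms(3) lpo_cut_def by blast
  then have "fst (lpo_restrict P Z) = {} \<or> fst (lpo_restrict P (fst P - Z)) = {}"
    using assms pom_of_cut_split[OF assms(1,3)] is_lpo_restrict pom_of_eq_one_iff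
    unfolding seq_prime_def by (metis Diff_subset)
  then show ?thesis using Z by (cases P) (auto simp: lpo_restrict_def)
qed

lemma lpo_cut_seq_left: "lpo_cut (lpo_seq (C, R, l) (D, S, m)) ((*) 2 ` C)"
  by (auto simp: lpo_cut_def lpo_seq_carrier)

lemma lpo_cut_seq_least:
  assumes P: "is_lpo (C, R, l)" "seq_prime (pom_of (C, R, l))" and Q: "is_lpo (D, S, m)"
    and Z: "lpo_cut (lpo_seq (C, R, l) (D, S, m)) Z" "Z \<noteq> {}"
  shows "(*) 2 ` C \<subseteq> Z"
proof -
  have "Z \<subseteq> (*) 2 ` C \<or> (*) 2 ` C \<subseteq> Z"
    using lpo_cut_chain is_lpo_seq[OF P(1) Q] Z(1) lpo_cut_seq_left by blast
  moreover have "(*) 2 ` C \<subseteq> Z" if sub: "Z \<subseteq> (*) 2 ` C"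
  proof -
    define Z' where "Z' = {c. 2 * c \<in> Z}"
    have Z_eq: "Z = (*) 2 ` Z'" using sub by (auto simp: Z'_def)
    have "lpo_cut (C, R, l) Z'"
      unfolding lpo_cut_def
    proof (intro conjI ballI)
      show "Z' \<subseteq> fst (C, R, l)" using sub by (auto simp: Z'_def)
      fix x y assume "x \<in> Z'" "y \<in> fst (C, R, l) - Z'"
      then have "2 * x \<in> Z" "2 * y \<in> fst (lpo_seq (C, R, l) (D, S, m)) - Z"
        by (simp_all add: Z'_def)
      then have "(2 * x, 2 * y) \<in> fst (snd (lpo_seq (C, R, l) (D, S, m)))"
        using Z(1) unfolding lpo_cut_def by blast
      then show "(x, y) \<in> fst (snd (C, R, l))" by simp
    qed
    moreover have "Z' \<noteq> {}" using Z(2) Z_eq by blast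
    ultimately have "Z' = C" using seq_prime_lpo_cut[OF P] by fastforce
    then show ?thesis using Z_eq by simp
  qed
  ultimately show ?thesis by blast
qed

lemma lpo_iso_by_seq_left:
  assumes f: "lpo_iso_by f (lpo_seq (C1, R1, l1) (D1, S1, m1)) (lpo_seq (C2, R2, l2) (D2, S2, m2))"
    and P1: "is_lpo (C1, R1, l1)" "seq_prime (pom_of (C1, R1, l1))" and Q1: "is_lpo (D1, S1, m1)"
    and P2: "is_lpo (C2, R2, l2)" "seq_prime (pom_of (C2, R2, l2))" and Q2: "is_lpo (D2, S2, m2)"
  shows "f ` (*) 2 ` C1 = (*) 2 ` C2"
proof
  let ?X1 = "fst (lpo_seq (C1, R1, l1) (D1, S1, m1))"
  have ne: "C1 \<noteq> {}" "C2 \<noteq> {}"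
    using P1 P2 pom_of_eq_one_iff unfolding seq_prime_def by fastforce+
  have "lpo_cut (lpo_seq (C2, R2, l2) (D2, S2, m2)) (f ` (*) 2 ` C1)"
    using lpo_iso_by_cut[OF f lpo_cut_seq_left] .
  then show "(*) 2 ` C2 \<subseteq> f ` (*) 2 ` C1"
    using lpo_cut_seq_least[OF P2 Q2] ne(1) by blast
  define g where "g = inv_into ?X1 f"
  have g: "lpo_iso_by g (lpo_seq (C2, R2, l2) (D2, S2, m2)) (lpo_seq (C1, R1, l1) (D1, S1, m1))"
    unfolding g_def using lpo_iso_by_inv[OF f] by simp
  have "(*) 2 ` C1 \<subseteq> g ` (*) 2 ` C2"
    using lpo_cut_seq_least[OF P1 Q1] lpo_iso_by_cut[OF g lpo_cut_seq_left] ne(2) by blast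
  then have "f ` (*) 2 ` C1 \<subseteq> f ` g ` (*) 2 ` C2" by blast
  also have "\<dots> = (*) 2 ` C2"
    using f unfolding g_def lpo_iso_by_fst_snd bij_betw_def
    by (intro image_inv_into_cancel) (auto simp: lpo_seq_carrier)
  finally show "f ` (*) 2 ` C1 \<subseteq> (*) 2 ` C2" .
qed

lemma lpo_iso_seq_restrict_left:
  "lpo_iso (C, R, l) (lpo_restrict (lpo_seq (C, R, l) (D, S, m)) ((*) 2 ` C))"
proof -
  have "lpo_iso_by ((*) 2) (C, R, l) (lpo_restrict (lpo_seq (C, R, l) (D, S, m)) ((*) 2 ` C))"
    by (auto simp: lpo_iso_by_fst_snd lpo_restrict_def bij_betw_def inj_on_def)
  then show ?thesis using lpo_iso_iff_iso_by by blast
qed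

lemma lpo_iso_seq_restrict_right:
  "lpo_iso (D, S, m) (lpo_restrict (lpo_seq (C, R, l) (D, S, m)) ((\<lambda>x. Suc (2 * x)) ` D))"
proof -
  have "lpo_iso_by (\<lambda>x. Suc (2 * x)) (D, S, m)
          (lpo_restrict (lpo_seq (C, R, l) (D, S, m)) ((\<lambda>x. Suc (2 * x)) ` D))"
    by (auto simp: lpo_iso_by_fst_snd lpo_restrict_def bij_betw_def inj_on_def)
  then show ?thesis using lpo_iso_iff_iso_by by blast
qed

lemma lpo_seq_cancel:
  assumes iso: "lpo_iso (lpo_seq (C1, R1, l1) (D1, S1, m1)) (lpo_seq (C2, R2, l2) (D2, S2, m2))"
    and P1: "is_lpo (C1, R1, l1)" "seq_prime (pom_of (C1, R1, l1))" and Q1: "is_lpo (D1, S1, m1)"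
    and P2: "is_lpo (C2, R2, l2)" "seq_prime (pom_of (C2, R2, l2))" and Q2: "is_lpo (D2, S2, m2)"
  shows "lpo_iso (C1, R1, l1) (C2, R2, l2) \<and> lpo_iso (D1, S1, m1) (D2, S2, m2)"
proof -
  let ?S1 = "lpo_seq (C1, R1, l1) (D1, S1, m1)" and ?S2 = "lpo_seq (C2, R2, l2) (D2, S2, m2)"
  obtain f where f: "lpo_iso_by f ?S1 ?S2" using iso lpo_iso_iff_iso_by by blast
  have left: "f ` (*) 2 ` C1 = (*) 2 ` C2" using lpo_iso_by_seq_left[OF f P1 Q1 P2 Q2] .
  have odd_part: "fst (lpo_seq (C, R, l) (D, S, m)) - (*) 2 ` C = (\<lambda>x. Suc (2 * x)) ` D"
    for C R l D S m
    by (auto simp: lpo_seq_carrier)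
  have f_bij: "inj_on f (fst ?S1)" "f ` fst ?S1 = fst ?S2"
    using f by (simp_all add: lpo_iso_by_fst_snd bij_betw_def)
  have "f ` (\<lambda>x. Suc (2 * x)) ` D1 = f ` (fst ?S1 - (*) 2 ` C1)" by (simp only: odd_part)
  also have "\<dots> = f ` fst ?S1 - f ` (*) 2 ` C1"
    using f_bij(1) by (rule inj_on_image_set_diff) (auto simp: lpo_seq_carrier)
  also have "\<dots> = (\<lambda>x. Suc (2 * x)) ` D2" by (simp only: f_bij(2) left odd_part)
  finally have right: "f ` (\<lambda>x. Suc (2 * x)) ` D1 = (\<lambda>x. Suc (2 * x)) ` D2" .
  have "(*) 2 ` C1 \<subseteq> fst ?S1" "(\<lambda>x. Suc (2 * x)) ` D1 \<subseteq> fst ?S1"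
    by (auto simp: lpo_seq_carrier)
  from lpo_iso_by_restrict[OF f this(1)] lpo_iso_by_restrict[OF f this(2)]
  have "lpo_iso (lpo_restrict ?S1 ((*) 2 ` C1)) (lpo_restrict ?S2 ((*) 2 ` C2))"
    "lpo_iso (lpo_restrict ?S1 ((\<lambda>x. Suc (2 * x)) ` D1)) (lpo_restrict ?S2 ((\<lambda>x. Suc (2 * x)) ` D2))"
    unfolding left right lpo_iso_iff_iso_by by blast+
  then show ?thesis
    using lpo_iso_trans[OF lpo_iso_trans lpo_iso_sym]
      lpo_iso_seq_restrict_left lpo_iso_seq_restrict_right by blast
qed

lemma pom_seq_cancel:
  assumes "seq_prime U1" "seq_prime U2" "pom_seq U1 V1 = pom_seq U2 V2"
  shows "U1 = U2 \<and> V1 = V2"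
proof -
  obtain C1 R1 l1 where P1: "pom_rep U1 = (C1, R1, l1)" "is_lpo (C1, R1, l1)" "pom_of (C1, R1, l1) = U1"
    by (rule pom_rep_cases)
  obtain D1 S1 m1 where Q1: "pom_rep V1 = (D1, S1, m1)" "is_lpo (D1, S1, m1)" "pom_of (D1, S1, m1) = V1"
    by (rule pom_rep_cases)
  obtain C2 R2 l2 where P2: "pom_rep U2 = (C2, R2, l2)" "is_lpo (C2, R2, l2)" "pom_of (C2, R2, l2) = U2"
    by (rule pom_rep_cases)
  obtain D2 S2 m2 where Q2: "pom_rep V2 = (D2, S2, m2)" "is_lpo (D2, S2, m2)" "pom_of (D2, S2, m2) = V2"
    by (rule pom_rep_cases)
  have "pom_of (lpo_seq (C1, R1, l1) (D1, S1, m1)) = pom_of (lpo_seq (C2, R2, l2) (D2, S2, m2))"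
    using assms(3) unfolding pom_seq_def P1(1) Q1(1) P2(1) Q2(1) .
  then have "lpo_iso (lpo_seq (C1, R1, l1) (D1, S1, m1)) (lpo_seq (C2, R2, l2) (D2, S2, m2))"
    using pom_of_eq_iff is_lpo_seq P1(2) Q1(2) P2(2) Q2(2) by blast
  from lpo_seq_cancel[OF this P1(2) _ Q1(2) P2(2) _ Q2(2)]
  have "lpo_iso (C1, R1, l1) (C2, R2, l2)" "lpo_iso (D1, S1, m1) (D2, S2, m2)"
    using assms(1,2) P1(3) P2(3) by simp_all
  then have "pom_of (C1, R1, l1) = pom_of (C2, R2, l2)" "pom_of (D1, S1, m1) = pom_of (D2, S2, m2)"
    using pom_of_eq_iff P1(2) Q1(2) P2(2) Q2(2) by blast+
  then show ?thesis using P1(3) Q1(3) P2(3) Q2(3) by simp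
qed

lemma pom_seq_eq_one_iff: "pom_seq U V = pom_one \<longleftrightarrow> U = pom_one \<and> V = pom_one"
proof -
  obtain C R l where P: "pom_rep U = (C, R, l)" "is_lpo (C, R, l)" "pom_of (C, R, l) = U"
    by (rule pom_rep_cases)
  obtain D S m where Q: "pom_rep V = (D, S, m)" "is_lpo (D, S, m)" "pom_of (D, S, m) = V"
    by (rule pom_rep_cases)
  have "pom_seq U V = pom_of (lpo_seq (C, R, l) (D, S, m))" unfolding pom_seq_def P Q ..
  then have "pom_seq U V = pom_one \<longleftrightarrow> fst (lpo_seq (C, R, l) (D, S, m)) = {}"
    using pom_of_eq_one_iff[OF is_lpo_seq[OF P(2) Q(2)]] by simp
  also have "\<dots> \<longleftrightarrow> C = {} \<and> D = {}" by (simp add: lpo_seq_carrier)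
  also have "\<dots> \<longleftrightarrow> U = pom_one \<and> V = pom_one"
    using pom_of_eq_one_iff P(2,3) Q(2,3) by fastforce
  finally show ?thesis .
qed

lemma pom_one_notin_subst_word_Cons:
  assumes "atomic \<Sigma> \<zeta>" "a \<in> \<Sigma>" shows "pom_one \<notin> subst_word \<zeta> (a # w)"
proof
  assume "pom_one \<in> subst_word \<zeta> (a # w)"
  then obtain U V where "U \<in> \<zeta> a" "pom_one = pom_seq U V" by (auto simp: pset_seq_def)
  then show False using assms pom_seq_eq_one_iff unfolding atomic_def seq_prime_def by metis
qed

lemma subst_word_disjoint:
  assumes atom: "atomic \<Sigma> \<zeta>" shows "disjoint_family_on (subst_word \<zeta>) (lists \<Sigma>)"
proof -
  have "w = w'" if "w \<in> lists \<Sigma>" "w' \<in> lists \<Sigma>" "X \<in> subst_word \<zeta> w" "X \<in> subst_word \<zeta> w'"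
    for w w' X
    using that
  proof (induction w arbitrary: w' X rule: lists.induct)
    case Nil
    then show ?case using pom_one_notin_subst_word_Cons[OF atom] by (cases w') auto
  next
    case (Cons a w)
    then obtain b v where w': "w' = b # v"
      using pom_one_notin_subst_word_Cons[OF atom] by (cases w') auto
    from Cons.prems obtain U V U' V' where
      UV: "U \<in> \<zeta> a" "V \<in> subst_word \<zeta> w" "U' \<in> \<zeta> b" "V' \<in> subst_word \<zeta> v"
        "X = pom_seq U V" "X = pom_seq U' V'"
      by (auto simp: w' pset_seq_def)
    have "a \<in> \<Sigma>" "b \<in> \<Sigma>" using Cons.hyps(1) Cons.prems(1) w' by simp_all
    then have "U = U' \<and> V = V'"
      using pom_seq_cancel UV atom unfolding atomic_def by metis
    then have "a = b" using UV \<open>a \<in> \<Sigma>\<close> \<open>b \<in> \<Sigma>\<close> atom unfolding atomic_def by blast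
    moreover have "w = v" using Cons.IH Cons.prems UV \<open>U = U' \<and> V = V'\<close> w' by simp
    ultimately show ?case using w' by simp
  qed
  then show ?thesis unfolding disjoint_family_on_def by blast
qed

lemma subst_word_nonempty:
  assumes "atomic \<Sigma> \<zeta>" "w \<in> lists \<Sigma>" shows "subst_word \<zeta> w \<noteq> {}"
  using assms(2)
proof (induction w rule: lists.induct)
  case (Cons a w)
  then have "\<zeta> a \<noteq> {}" using assms(1) unfolding atomic_def by blast
  with Cons show ?case by (auto simp: pset_seq_def)
qed simp

lemma UN_Int_UN_disjoint_family:
  assumes "disjoint_family_on A I" "J \<subseteq> I" "K \<subseteq> I"
  shows "(\<Union>i\<in>J. A i) \<inter> (\<Union>i\<in>K. A i) = (\<Union>i\<in>J \<inter> K. A i)"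
proof -
  have "A j \<inter> A k = {}" if "j \<in> J" "k \<in> K" "j \<noteq> k" for j k
    using disjoint_family_onD[OF assms(1)] assms(2,3) that by blast
  then show ?thesis by blast
qed

lemma UN_Diff_UN_disjoint_family:
  assumes "disjoint_family_on A I" "J \<subseteq> I" "K \<subseteq> I"
  shows "(\<Union>i\<in>J. A i) - (\<Union>i\<in>K. A i) = (\<Union>i\<in>J - K. A i)"
proof -
  have "A j \<inter> A k = {}" if "j \<in> J - K" "k \<in> K" for j k
    using disjoint_family_onD[OF assms(1)] assms(2,3) that by blast
  then show ?thesis by blast
qed

theorem lemma3p12:
  fixes \<Sigma> :: "'s set" and \<Delta> :: "'d set" and \<zeta> :: "'s \<Rightarrow> 'd pomset set"
    and L L' :: "'s list set"
  assumes subst: "\<forall>a\<in>\<Sigma>. \<zeta> a \<subseteq> SP \<Delta>"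
    and atom: "atomic \<Sigma> \<zeta>"
    and L: "L \<subseteq> lists \<Sigma>" and L': "L' \<subseteq> lists \<Sigma>"
  shows "subst_lang \<zeta> (L \<inter> L') = subst_lang \<zeta> L \<inter> subst_lang \<zeta> L'
       \<and> subst_lang \<zeta> (L - L') = subst_lang \<zeta> L - subst_lang \<zeta> L'
       \<and> (subst_lang \<zeta> L = {} \<longleftrightarrow> L = {})"
proof -
  have disj: "disjoint_family_on (subst_word \<zeta>) (lists \<Sigma>)" using subst_word_disjoint[OF atom] .
  have "subst_lang \<zeta> (L \<inter> L') = subst_lang \<zeta> L \<inter> subst_lang \<zeta> L'"
    unfolding subst_lang_def using UN_Int_UN_disjoint_family[OF disj L L'] by (rule sym)
  moreover have "subst_lang \<zeta> (L - L') = subst_lang \<zeta> L - subst_lang \<zeta> L'"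
    unfolding subst_lang_def using UN_Diff_UN_disjoint_family[OF disj L L'] by (rule sym)
  moreover have "subst_lang \<zeta> L = {} \<longleftrightarrow> L = {}"
    using subst_word_nonempty[OF atom] L unfolding subst_lang_def by blast
  ultimately show ?thesis by blast
qed

end
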